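(* Consider the setting described in the context. For every $j\in\{1,\dots,n\}$ and every $t\in[0,T]$, the modal error $e_j(t)=d^h_j(t)u^h_j-d_j(t)u_j$ satisfies \[ \begin{aligned} \|e_j(t)\|_{L^2(\Omega)}\le\ & \|u_0\|_{L^2}\Big(2\|u^h_j-u_j\|_{L^2}+|\cos(\omega^h_jt)-\cos(\omega_jt)|\Big)\\ &+\frac{\|v_0\|_{L^2}}{\omega_j}\Big(\frac{\omega^h_j-\omega_j}{\omega_j}+2\|u^h_j-u_j\|_{L^2}+|\sin(\omega^h_jt)-\sin(\omega_jt)|\Big)\\ &+\frac{1}{\omega_j}\int_0^t\|f(\tau)\|_{L^2}\,d\tau\Big(\frac{\omega^h_j-\omega_j}{\omega_j}+2\|u^h_j-u_j\|_{L^2}+\max_{\tau\in[0,t]}|\sin(\omega^h_j\tau)-\sin(\omega_j\tau)|\Big). \end{aligned} \]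
   Context: Let $\Omega\subset\mathbb{R}^d$ be open, connected, with Lipschitz boundary, $T>0$, and $V\subseteq H^1(\Omega)$ a closed subspace (e.g. functions vanishing on a Dirichlet boundary part) such that the eigenvalue problem $(\nabla u,\nabla v)_{L^2(\Omega)^d}=\lambda(u,v)_{L^2(\Omega)}$ for all $v\in V$ has eigenpairs $(\lambda_i,u_i)_{i\ge1}$ with $0<\lambda_1\le\lambda_2\le\cdots$ and $\{u_i\}$ an $L^2(\Omega)$-orthonormal basis. Let $V^h\subset V$ be a finite-dimensional subspace of dimension $n$ (conforming Galerkin space with consistent mass, i.e. the exact $L^2$ inner product), with discrete eigenpairs $(\lambda^h_i,u^h_i)_{i=1}^n$ of the same problem restricted to $V^h$, ordered $0<\lambda^h_1\le\dots\le\lambda^h_n$ and $L^2$-orthonormal. Set $\omega_i=\sqrt{\lambda_i}$, $\omega^h_i=\sqrt{\lambda^h_i}$. Data: $u_0,v_0\in L^2(\Omega)$, $f\in C^0([0,T];L^2(\Omega))$. Define $u_{i,0}=(u_0,u_i)_{L^2}$, $v_{i,0}=(v_0,u_i)_{L^2}$, $f_i(t)=(f(t),u_i)_{L^2}$ and analogously $u^h_{i,0},v^h_{i,0},f^h_i$ with $u^h_i$ in place of $u_i$, and the modal coefficients \[ d_i(t)=u_{i,0}\cos(\omega_it)+\frac{v_{i,0}}{\omega_i}\sin(\omega_it)+\frac1{\omega_i}\int_0^t\sin(\omega_i(t-\tau))f_i(\tau)\,d\tau, \] \[ d^h_i(t)=u^h_{i,0}\cos(\omega^h_it)+\frac{v^h_{i,0}}{\omega^h_i}\sin(\omega^h_it)+\frac1{\omega^h_i}\int_0^t\sin(\omega^h_i(t-\tau))f^h_i(\tau)\,d\tau,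 \] so that the exact and Galerkin solutions of the wave equation $\partial_{tt}u-\Delta u=f$ are $u=\sum_{i\ge1}d_iu_i$ and $u^h=\sum_{i=1}^nd^h_iu^h_i$. *)

theory Defs
  imports "HOL-Analysis.Analysis"
begin

definition L2 :: "(real^'d) set \<Rightarrow> (real^'d \<Rightarrow> real) \<Rightarrow> bool" where
  "L2 \<Omega> u \<longleftrightarrow> set_borel_measurable lborel \<Omega> u \<and> set_integrable lborel \<Omega> (\<lambda>x. (u x)\<^sup>2)"

definition l2inner :: "(real^'d) set \<Rightarrow> (real^'d \<Rightarrow> real) \<Rightarrow> (real^'d \<Rightarrow> real) \<Rightarrow> real" where
  "l2inner \<Omega> u v = (LINT x:\<Omega>|lborel. u x * v x)"

definition l2norm :: "(real^'d) set \<Rightarrow> (real^'d \<Rightarrow> real) \<Rightarrow> real" where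
  "l2norm \<Omega> u = sqrt (l2inner \<Omega> u u)"

definition test_fun :: "(real^'d) set \<Rightarrow> (real^'d \<Rightarrow> real) \<Rightarrow> (real^'d \<Rightarrow> real^'d) \<Rightarrow> bool" where
  "test_fun \<Omega> \<phi> D\<phi> \<longleftrightarrow>
     (\<forall>x. (\<phi> has_derivative (\<lambda>h. D\<phi> x \<bullet> h)) (at x)) \<and> continuous_on UNIV D\<phi> \<and>
     compact (closure {x. \<phi> x \<noteq> 0}) \<and> closure {x. \<phi> x \<noteq> 0} \<subseteq> \<Omega>"

definition weak_grad :: "(real^'d) set \<Rightarrow> (real^'d \<Rightarrow> real) \<Rightarrow> (real^'d \<Rightarrow> real^'d) \<Rightarrow> bool" where
  "weak_grad \<Omega> u g \<longleftrightarrow> (\<forall>i. L2 \<Omega> (\<lambda>x. g x $ i)) \<and>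
     (\<forall>\<phi> D\<phi>. test_fun \<Omega> \<phi> D\<phi> \<longrightarrow>
        (\<forall>i. (LINT x:\<Omega>|lborel. u x * D\<phi> x $ i) = - (LINT x:\<Omega>|lborel. g x $ i * \<phi> x)))"

definition H1 :: "(real^'d) set \<Rightarrow> (real^'d \<Rightarrow> real) \<Rightarrow> bool" where
  "H1 \<Omega> u \<longleftrightarrow> L2 \<Omega> u \<and> (\<exists>g. weak_grad \<Omega> u g)"

definition wgrad :: "(real^'d) set \<Rightarrow> (real^'d \<Rightarrow> real) \<Rightarrow> (real^'d \<Rightarrow> real^'d)" where
  "wgrad \<Omega> u = (SOME g. weak_grad \<Omega> u g)"

definition agrad :: "(real^'d) set \<Rightarrow> (real^'d \<Rightarrow> real) \<Rightarrow> (real^'d \<Rightarrow> real) \<Rightarrow> real" where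
  "agrad \<Omega> u v = (LINT x:\<Omega>|lborel. wgrad \<Omega> u x \<bullet> wgrad \<Omega> v x)"

definition h1norm :: "(real^'d) set \<Rightarrow> (real^'d \<Rightarrow> real) \<Rightarrow> real" where
  "h1norm \<Omega> u = sqrt (l2inner \<Omega> u u + agrad \<Omega> u u)"

definition closed_H1_subspace :: "(real^'d) set \<Rightarrow> (real^'d \<Rightarrow> real) set \<Rightarrow> bool" where
  "closed_H1_subspace \<Omega> V \<longleftrightarrow>
     (\<forall>v\<in>V. H1 \<Omega> v) \<and> (\<lambda>x. 0) \<in> V \<and>
     (\<forall>v\<in>V. \<forall>w\<in>V. (\<lambda>x. v x + w x) \<in> V) \<and>
     (\<forall>c. \<forall>v\<in>V. (\<lambda>x. c * v x) \<in> V) \<and>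
     (\<forall>w vs. (\<forall>k. vs k \<in> V) \<and> H1 \<Omega> w \<and> (\<lambda>k. h1norm \<Omega> (\<lambda>x. vs k x - w x)) \<longlonglongrightarrow> 0
             \<longrightarrow> w \<in> V)"

definition galerkin_space :: "(real^'d) set \<Rightarrow> (real^'d \<Rightarrow> real) set \<Rightarrow> nat \<Rightarrow> (real^'d \<Rightarrow> real) set \<Rightarrow> bool" where
  "galerkin_space \<Omega> V n Vh \<longleftrightarrow>
     (\<exists>b. (\<forall>k\<in>{1..n}. b k \<in> V) \<and>
          Vh = {(\<lambda>x. \<Sum>k\<in>{1..n}. c k * b k x) | c. True} \<and>
          (\<forall>c. l2norm \<Omega> (\<lambda>x. \<Sum>k\<in>{1..n}. c k * b k x) = 0 \<longrightarrow> (\<forall>k\<in>{1..n}. c k = 0)))"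

text \<open>Modal coefficient of the (semi-discrete) wave solution.\<close>
definition modal_coeff :: "real \<Rightarrow> real \<Rightarrow> real \<Rightarrow> (real \<Rightarrow> real) \<Rightarrow> real \<Rightarrow> real" where
  "modal_coeff \<omega> a0 b0 g t =
     a0 * cos (\<omega> * t) + b0 / \<omega> * sin (\<omega> * t)
     + 1 / \<omega> * integral {0..t} (\<lambda>\<tau>. sin (\<omega> * (t - \<tau>)) * g \<tau>)"

end

theory Submission
  imports Defs
begin

(* The modal error splits as dh uh_j - d u_j = (dh - d) uh_j + d (uh_j - u_j), so its norm is at
   most |dh - d| + |d| delta with delta = ||uh_j - u_j||.  In dh - d, the projections of the data
   onto uh_j and u_j differ by at most (data norm) * delta by Cauchy-Schwarz, and the frequencies
   satisfy omega_j <= omegah_j because a Galerkin eigenvalue bounds the exact one from above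
   (min-max principle); hence |1/omegah_j - 1/omega_j| <= (omegah_j - omega_j) / omega_j^2, and the
   difference of the two Duhamel kernels is bounded by the maximal sine difference. *)

section \<open>Elementary real analysis\<close>

lemma discriminant_le_of_nonneg_quadratic:
  fixes a b c :: real
  assumes c: "c \<ge> 0" and nonneg: "\<And>t. 0 \<le> a - 2 * t * b + t\<^sup>2 * c"
  shows "b\<^sup>2 \<le> a * c"
proof (cases "c = 0")
  case True
  have "b = 0"
  proof (rule ccontr)
    assume "b \<noteq> 0"
    have "0 \<le> a - 2 * ((a + 1) / (2 * b)) * b" using nonneg[of "(a + 1) / (2 * b)"] True by simp
    also have "\<dots> = -1" using \<open>b \<noteq> 0\<close> by (simp add: field_simps)
    finally show False by simp
  qed
  then show ?thesis using True by simp
next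
  case False
  with c have "c > 0" by simp
  have "0 \<le> a - 2 * (b / c) * b + (b / c)\<^sup>2 * c" by (rule nonneg)
  also have "\<dots> = a - b\<^sup>2 / c" using \<open>c > 0\<close> by (simp add: field_simps power2_eq_square)
  finally show ?thesis using \<open>c > 0\<close> by (simp add: field_simps)
qed

lemma continuous_on_of_modulus:
  fixes h :: "'a::topological_space \<Rightarrow> real"
  assumes modulus: "\<And>s. s \<in> X \<Longrightarrow> ((\<lambda>r. G r s) \<longlongrightarrow> 0) (at s within X)"
    and le: "\<And>r s. r \<in> X \<Longrightarrow> s \<in> X \<Longrightarrow> \<bar>h r - h s\<bar> \<le> G r s"
  shows "continuous_on X h"
  unfolding continuous_on_def
proof
  fix s assume s: "s \<in> X"
  have "eventually (\<lambda>r. norm (h r - h s) \<le> G r s) (at s within X)"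
    unfolding eventually_at_filter using le s by (auto intro!: always_eventually)
  then have "((\<lambda>r. h r - h s) \<longlongrightarrow> 0) (at s within X)"
    using modulus[OF s] by (rule Lim_null_comparison)
  then show "(h \<longlongrightarrow> h s) (at s within X)" by (rule LIM_zero_cancel)
qed

lemma abs_integral_mult_le:
  fixes p q m :: "real \<Rightarrow> real"
  assumes cont: "continuous_on {a..b} p" "continuous_on {a..b} q" "continuous_on {a..b} m"
    and p: "\<And>\<tau>. \<tau> \<in> {a..b} \<Longrightarrow> \<bar>p \<tau>\<bar> \<le> C"
    and q: "\<And>\<tau>. \<tau> \<in> {a..b} \<Longrightarrow> \<bar>q \<tau>\<bar> \<le> m \<tau> * D"
  shows "\<bar>integral {a..b} (\<lambda>\<tau>. p \<tau> * q \<tau>)\<bar> \<le> C * D * integral {a..b} m"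
proof -
  have "norm (integral {a..b} (\<lambda>\<tau>. p \<tau> * q \<tau>)) \<le> integral {a..b} (\<lambda>\<tau>. C * D * m \<tau>)"
  proof (rule integral_norm_bound_integral)
    fix \<tau> assume "\<tau> \<in> {a..b}"
    then have "\<bar>p \<tau>\<bar> * \<bar>q \<tau>\<bar> \<le> C * (m \<tau> * D)" using p q by (intro mult_mono') auto
    then show "norm (p \<tau> * q \<tau>) \<le> C * D * m \<tau>" by (simp add: abs_mult ac_simps)
  qed (use cont in \<open>auto intro!: integrable_continuous_interval continuous_intros\<close>)
  then show ?thesis by simp
qed

lemma abs_inverse_diff_le:
  fixes \<omega> \<omega>h :: real
  assumes "0 < \<omega>" "\<omega> \<le> \<omega>h"
  shows "\<bar>1 / \<omega>h - 1 / \<omega>\<bar> \<le> (\<omega>h - \<omega>) / \<omega> * (1 / \<omega>)"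
proof -
  have "\<bar>1 / \<omega>h - 1 / \<omega>\<bar> = (\<omega>h - \<omega>) / (\<omega> * \<omega>h)" using assms by (simp add: field_simps)
  also have "\<dots> \<le> (\<omega>h - \<omega>) / (\<omega> * \<omega>)" using assms by (intro divide_left_mono mult_left_mono) auto
  finally show ?thesis by simp
qed

lemma abs_sin_diff_le_Sup:
  fixes \<omega> \<omega>h t \<tau> :: real
  assumes "\<tau> \<in> {0..t}"
  shows "\<bar>sin (\<omega>h * (t - \<tau>)) - sin (\<omega> * (t - \<tau>))\<bar>
    \<le> (SUP \<sigma>\<in>{0..t}. \<bar>sin (\<omega>h * \<sigma>) - sin (\<omega> * \<sigma>)\<bar>)"
proof -
  have "\<bar>sin (\<omega>h * x) - sin (\<omega> * x)\<bar> \<le> 2" for x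
    using abs_sin_le_one[of "\<omega>h * x"] abs_sin_le_one[of "\<omega> * x"] by linarith
  then have "bdd_above ((\<lambda>\<sigma>. \<bar>sin (\<omega>h * \<sigma>) - sin (\<omega> * \<sigma>)\<bar>) ` {0..t})"
    by (intro bdd_aboveI2)
  moreover have "t - \<tau> \<in> {0..t}" using assms by auto
  ultimately show ?thesis by (rule cSUP_upper2) simp
qed

lemma modal_coeff_error_arith:
  fixes N0 N1 F \<delta> \<omega> \<omega>h M \<alpha> \<alpha>h \<beta> \<beta>h ch c sh s J1 J2 J3 :: real
  assumes \<omega>: "0 < \<omega>" "\<omega> \<le> \<omega>h" and nonneg: "0 \<le> F" "0 \<le> \<delta>"
    and \<alpha>: "\<bar>\<alpha>\<bar> \<le> N0" "\<bar>\<alpha>h - \<alpha>\<bar> \<le> N0 * \<delta>" and \<beta>: "\<bar>\<beta>\<bar> \<le> N1" "\<bar>\<beta>h - \<beta>\<bar> \<le> N1 * \<delta>"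
    and trig: "\<bar>ch\<bar> \<le> 1" "\<bar>c\<bar> \<le> 1" "\<bar>sh\<bar> \<le> 1" "\<bar>s\<bar> \<le> 1"
    and J: "\<bar>J1\<bar> \<le> \<delta> * F" "\<bar>J2\<bar> \<le> F" "\<bar>J3\<bar> \<le> M * F" "\<bar>J2 - J3\<bar> \<le> F"
  shows "\<bar>(\<alpha>h * ch + \<beta>h / \<omega>h * sh + 1 / \<omega>h * (J1 + J2)) - (\<alpha> * c + \<beta> / \<omega> * s + 1 / \<omega> * (J2 - J3))\<bar>
         + \<bar>\<alpha> * c + \<beta> / \<omega> * s + 1 / \<omega> * (J2 - J3)\<bar> * \<delta>
    \<le> N0 * (2 * \<delta> + \<bar>ch - c\<bar>) + N1 / \<omega> * ((\<omega>h - \<omega>) / \<omega> + 2 * \<delta> + \<bar>sh - s\<bar>)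
       + 1 / \<omega> * F * ((\<omega>h - \<omega>) / \<omega> + 2 * \<delta> + M)"
proof -
  define r where "r = 1 / \<omega>"
  define q where "q = (\<omega>h - \<omega>) / \<omega>"
  have r: "0 < r" using \<omega> by (simp add: r_def)
  have rh: "\<bar>1 / \<omega>h\<bar> \<le> r" using \<omega> by (simp add: r_def frac_le)
  have dr: "\<bar>1 / \<omega>h - 1 / \<omega>\<bar> \<le> q * r"
    using abs_inverse_diff_le[OF \<omega>] by (simp add: q_def r_def)
  have mult: "\<bar>x * y\<bar> \<le> X * Y" if "\<bar>x\<bar> \<le> X" "\<bar>y\<bar> \<le> Y" for x y X Y :: real
    using that by (simp add: abs_mult mult_mono')
  have add: "\<bar>x + y\<bar> \<le> X + Y" if "\<bar>x\<bar> \<le> X" "\<bar>y\<bar> \<le> Y" for x y X Y :: real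
    using that abs_triangle_ineq[of x y] by linarith
  have r_abs: "\<bar>r\<bar> \<le> r" using r by simp
  have T1: "\<bar>(\<alpha>h - \<alpha>) * ch\<bar> \<le> N0 * \<delta> * 1" using \<alpha> trig by (intro mult)
  have T2: "\<bar>\<alpha> * (ch - c)\<bar> \<le> N0 * \<bar>ch - c\<bar>" using \<alpha> by (intro mult) auto
  have T3: "\<bar>(\<beta>h - \<beta>) * sh * (1 / \<omega>h)\<bar> \<le> N1 * \<delta> * 1 * r" using \<beta> trig rh by (intro mult)
  have T4: "\<bar>\<beta> * sh * (1 / \<omega>h - 1 / \<omega>)\<bar> \<le> N1 * 1 * (q * r)" using \<beta> trig dr by (intro mult)
  have T5: "\<bar>\<beta> * r * (sh - s)\<bar> \<le> N1 * r * \<bar>sh - s\<bar>" using \<beta> r_abs by (intro mult) auto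
  have T6: "\<bar>J1 * (1 / \<omega>h)\<bar> \<le> \<delta> * F * r" using J rh by (intro mult)
  have T7: "\<bar>J2 * (1 / \<omega>h - 1 / \<omega>)\<bar> \<le> F * (q * r)" using J dr by (intro mult)
  have T8: "\<bar>J3 * r\<bar> \<le> M * F * r" using J r_abs by (intro mult)
  have D1: "\<bar>\<alpha> * c\<bar> \<le> N0 * 1" using \<alpha> trig by (intro mult)
  have D2: "\<bar>\<beta> * r * s\<bar> \<le> N1 * r * 1" using \<beta> trig r_abs by (intro mult)
  have D3: "\<bar>(J2 - J3) * r\<bar> \<le> F * r" using J r_abs by (intro mult)
  let ?dh = "\<alpha>h * ch + \<beta>h / \<omega>h * sh + 1 / \<omega>h * (J1 + J2)"
  let ?d = "\<alpha> * c + \<beta> / \<omega> * s + 1 / \<omega> * (J2 - J3)"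
  \<comment> \<open>each of the eight terms carries one small factor: \<open>\<delta>\<close>, \<open>q\<close>, a trigonometric difference or \<open>M\<close>\<close>
  have "\<bar>?dh - ?d\<bar> = \<bar>(\<alpha>h - \<alpha>) * ch + \<alpha> * (ch - c) + (\<beta>h - \<beta>) * sh * (1 / \<omega>h)
     + \<beta> * sh * (1 / \<omega>h - 1 / \<omega>) + \<beta> * r * (sh - s) + J1 * (1 / \<omega>h)
     + J2 * (1 / \<omega>h - 1 / \<omega>) + J3 * r\<bar>"
    by (simp add: r_def divide_inverse algebra_simps)
  also have "\<dots> \<le> N0 * \<delta> * 1 + N0 * \<bar>ch - c\<bar> + N1 * \<delta> * 1 * r + N1 * 1 * (q * r)
     + N1 * r * \<bar>sh - s\<bar> + \<delta> * F * r + F * (q * r) + M * F * r"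
    using T1 T2 T3 T4 T5 T6 T7 T8 by (intro add)
  finally have dh_d: "\<bar>?dh - ?d\<bar> \<le> \<dots>" .
  have "\<bar>?d\<bar> = \<bar>\<alpha> * c + \<beta> * r * s + (J2 - J3) * r\<bar>" by (simp add: r_def)
  also have "\<dots> \<le> N0 * 1 + N1 * r * 1 + F * r" using D1 D2 D3 by (intro add)
  finally have "\<bar>?d\<bar> \<le> N0 * 1 + N1 * r * 1 + F * r" .
  then have "\<bar>?d\<bar> * \<delta> \<le> (N0 * 1 + N1 * r * 1 + F * r) * \<delta>"
    using nonneg by (intro mult_right_mono) auto
  with dh_d have "\<bar>?dh - ?d\<bar> + \<bar>?d\<bar> * \<delta> \<le> N0 * \<delta> * 1 + N0 * \<bar>ch - c\<bar> + N1 * \<delta> * 1 * r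
     + N1 * 1 * (q * r) + N1 * r * \<bar>sh - s\<bar> + \<delta> * F * r + F * (q * r) + M * F * r
     + (N0 * 1 + N1 * r * 1 + F * r) * \<delta>" by linarith
  also have "\<dots> = N0 * (2 * \<delta> + \<bar>ch - c\<bar>) + N1 / \<omega> * ((\<omega>h - \<omega>) / \<omega> + 2 * \<delta> + \<bar>sh - s\<bar>)
       + 1 / \<omega> * F * ((\<omega>h - \<omega>) / \<omega> + 2 * \<delta> + M)"
    by (simp add: r_def q_def divide_inverse algebra_simps)
  finally show ?thesis .
qed

lemma modal_coeff_error:
  fixes g gh m :: "real \<Rightarrow> real"
  assumes \<omega>: "0 < \<omega>" "\<omega> \<le> \<omega>h" and t: "0 \<le> t" and \<delta>: "0 \<le> \<delta>"
    and \<alpha>: "\<bar>\<alpha>\<bar> \<le> N0" "\<bar>\<alpha>h - \<alpha>\<bar> \<le> N0 * \<delta>" and \<beta>: "\<bar>\<beta>\<bar> \<le> N1" "\<bar>\<beta>h - \<beta>\<bar> \<le> N1 * \<delta>"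
    and cont: "continuous_on {0..t} g" "continuous_on {0..t} gh" "continuous_on {0..t} m"
    and g: "\<And>\<tau>. \<tau> \<in> {0..t} \<Longrightarrow> \<bar>g \<tau>\<bar> \<le> m \<tau>"
    and gh: "\<And>\<tau>. \<tau> \<in> {0..t} \<Longrightarrow> \<bar>gh \<tau> - g \<tau>\<bar> \<le> m \<tau> * \<delta>"
  shows "\<bar>modal_coeff \<omega>h \<alpha>h \<beta>h gh t - modal_coeff \<omega> \<alpha> \<beta> g t\<bar> + \<bar>modal_coeff \<omega> \<alpha> \<beta> g t\<bar> * \<delta>
    \<le> N0 * (2 * \<delta> + \<bar>cos (\<omega>h * t) - cos (\<omega> * t)\<bar>)
      + N1 / \<omega> * ((\<omega>h - \<omega>) / \<omega> + 2 * \<delta> + \<bar>sin (\<omega>h * t) - sin (\<omega> * t)\<bar>)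
      + 1 / \<omega> * integral {0..t} m
          * ((\<omega>h - \<omega>) / \<omega> + 2 * \<delta> + (SUP \<tau>\<in>{0..t}. \<bar>sin (\<omega>h * \<tau>) - sin (\<omega> * \<tau>)\<bar>))"
proof -
  define ks where "ks \<tau> = sin (\<omega>h * (t - \<tau>))" for \<tau>
  define k where "k \<tau> = sin (\<omega> * (t - \<tau>))" for \<tau>
  define M where "M = (SUP \<tau>\<in>{0..t}. \<bar>sin (\<omega>h * \<tau>) - sin (\<omega> * \<tau>)\<bar>)"
  define F where "F = integral {0..t} m"
  have cont_k: "continuous_on {0..t} ks" "continuous_on {0..t} k"
    unfolding ks_def k_def by (intro continuous_intros)+
  have ks_k: "\<bar>ks \<tau> - k \<tau>\<bar> \<le> M" if "\<tau> \<in> {0..t}" for \<tau>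
    unfolding ks_def k_def M_def using that by (rule abs_sin_diff_le_Sup)
  have "0 \<le> F" unfolding F_def
    using g cont(3) by (intro integral_nonneg integrable_continuous_interval) force+
  have J1: "\<bar>integral {0..t} (\<lambda>\<tau>. ks \<tau> * (gh \<tau> - g \<tau>))\<bar> \<le> \<delta> * F"
    using abs_integral_mult_le[of 0 t ks "\<lambda>\<tau>. gh \<tau> - g \<tau>" m 1 \<delta>] cont cont_k gh
    by (simp add: F_def ks_def continuous_on_diff)
  have J2: "\<bar>integral {0..t} (\<lambda>\<tau>. ks \<tau> * g \<tau>)\<bar> \<le> F"
    using abs_integral_mult_le[of 0 t ks g m 1 1] cont cont_k g by (simp add: F_def ks_def)
  have J3: "\<bar>integral {0..t} (\<lambda>\<tau>. (ks \<tau> - k \<tau>) * g \<tau>)\<bar> \<le> M * F"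
    using abs_integral_mult_le[of 0 t "\<lambda>\<tau>. ks \<tau> - k \<tau>" g m M 1] cont cont_k g ks_k
    by (simp add: F_def continuous_on_diff)
  have J4: "\<bar>integral {0..t} (\<lambda>\<tau>. k \<tau> * g \<tau>)\<bar> \<le> F"
    using abs_integral_mult_le[of 0 t k g m 1 1] cont cont_k g by (simp add: F_def k_def)
  have int: "(\<lambda>\<tau>. ks \<tau> * (gh \<tau> - g \<tau>)) integrable_on {0..t}" "(\<lambda>\<tau>. ks \<tau> * g \<tau>) integrable_on {0..t}"
    "(\<lambda>\<tau>. (ks \<tau> - k \<tau>) * g \<tau>) integrable_on {0..t}"
    using cont cont_k by (auto intro!: integrable_continuous_interval continuous_intros)
  have split_h: "integral {0..t} (\<lambda>\<tau>. sin (\<omega>h * (t - \<tau>)) * gh \<tau>)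
      = integral {0..t} (\<lambda>\<tau>. ks \<tau> * (gh \<tau> - g \<tau>)) + integral {0..t} (\<lambda>\<tau>. ks \<tau> * g \<tau>)"
    using integral_add[OF int(1,2)] by (simp add: ks_def algebra_simps)
  have split: "integral {0..t} (\<lambda>\<tau>. sin (\<omega> * (t - \<tau>)) * g \<tau>)
      = integral {0..t} (\<lambda>\<tau>. ks \<tau> * g \<tau>) - integral {0..t} (\<lambda>\<tau>. (ks \<tau> - k \<tau>) * g \<tau>)"
    using integral_diff[OF int(2,3)] by (simp add: k_def algebra_simps)
  have "integral {0..t} (\<lambda>\<tau>. ks \<tau> * g \<tau>) - integral {0..t} (\<lambda>\<tau>. (ks \<tau> - k \<tau>) * g \<tau>)
      = integral {0..t} (\<lambda>\<tau>. k \<tau> * g \<tau>)"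
    using split by (simp add: k_def)
  with J4 have J23: "\<bar>integral {0..t} (\<lambda>\<tau>. ks \<tau> * g \<tau>) - integral {0..t} (\<lambda>\<tau>. (ks \<tau> - k \<tau>) * g \<tau>)\<bar> \<le> F"
    by simp
  show ?thesis
    unfolding modal_coeff_def split_h split F_def[symmetric] M_def[symmetric]
    using \<open>0 \<le> F\<close> by (intro modal_coeff_error_arith[OF \<omega> _ \<delta> \<alpha> \<beta> _ _ _ _ J1 J2 J3 J23]) auto
qed

section \<open>Semi-inner products on function spaces\<close>

locale semi_inner_product =
  fixes S :: "('a \<Rightarrow> 'v::real_vector) set" and B :: "('a \<Rightarrow> 'v) \<Rightarrow> ('a \<Rightarrow> 'v) \<Rightarrow> real"
  assumes zero_mem: "(\<lambda>x. 0) \<in> S"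
    and add_mem: "f \<in> S \<Longrightarrow> g \<in> S \<Longrightarrow> (\<lambda>x. f x + g x) \<in> S"
    and scale_mem: "f \<in> S \<Longrightarrow> (\<lambda>x. c *\<^sub>R f x) \<in> S"
    and B_add_left: "f \<in> S \<Longrightarrow> g \<in> S \<Longrightarrow> h \<in> S \<Longrightarrow> B (\<lambda>x. f x + g x) h = B f h + B g h"
    and B_scale_left: "f \<in> S \<Longrightarrow> h \<in> S \<Longrightarrow> B (\<lambda>x. c *\<^sub>R f x) h = c * B f h"
    and B_sym: "f \<in> S \<Longrightarrow> g \<in> S \<Longrightarrow> B f g = B g f"
    and B_nonneg: "f \<in> S \<Longrightarrow> 0 \<le> B f f"
begin

lemma diff_mem: "f \<in> S \<Longrightarrow> g \<in> S \<Longrightarrow> (\<lambda>x. f x - g x) \<in> S"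
  using add_mem[of f "\<lambda>x. (-1) *\<^sub>R g x"] scale_mem[of g "-1"] by simp

lemma B_diff_left: "f \<in> S \<Longrightarrow> g \<in> S \<Longrightarrow> h \<in> S \<Longrightarrow> B (\<lambda>x. f x - g x) h = B f h - B g h"
  using B_add_left[of f "\<lambda>x. (-1) *\<^sub>R g x" h] B_scale_left[of g h "-1"] scale_mem[of g "-1"] by simp

lemma B_add_right: "f \<in> S \<Longrightarrow> g \<in> S \<Longrightarrow> h \<in> S \<Longrightarrow> B h (\<lambda>x. f x + g x) = B h f + B h g"
  by (simp add: B_sym[of h] add_mem B_add_left)

lemma B_diff_right: "f \<in> S \<Longrightarrow> g \<in> S \<Longrightarrow> h \<in> S \<Longrightarrow> B h (\<lambda>x. f x - g x) = B h f - B h g"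
  by (simp add: B_sym[of h] diff_mem B_diff_left)

lemma B_scale_right: "f \<in> S \<Longrightarrow> h \<in> S \<Longrightarrow> B h (\<lambda>x. c *\<^sub>R f x) = c * B h f"
  by (simp add: B_sym[of h] scale_mem B_scale_left)

lemma combination_mem:
  "finite I \<Longrightarrow> (\<And>i. i \<in> I \<Longrightarrow> e i \<in> S) \<Longrightarrow> (\<lambda>x. \<Sum>i\<in>I. a i *\<^sub>R e i x) \<in> S"
proof (induction I rule: finite_induct)
  case empty then show ?case using zero_mem by simp
next
  case (insert i I) then show ?case using add_mem scale_mem by simp
qed

lemma B_combination_left:
  assumes "finite I" "\<And>i. i \<in> I \<Longrightarrow> e i \<in> S" "h \<in> S"
  shows "B (\<lambda>x. \<Sum>i\<in>I. a i *\<^sub>R e i x) h = (\<Sum>i\<in>I. a i * B (e i) h)"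
  using assms
proof (induction I rule: finite_induct)
  case empty
  show ?case using B_scale_left[OF zero_mem empty(2), of 0] by simp
next
  case (insert i I)
  then show ?case
    using B_add_left[of "\<lambda>x. a i *\<^sub>R e i x" "\<lambda>x. \<Sum>i\<in>I. a i *\<^sub>R e i x" h]
    by (simp add: scale_mem combination_mem B_scale_left)
qed

lemma B_combination_right:
  "finite I \<Longrightarrow> (\<And>i. i \<in> I \<Longrightarrow> e i \<in> S) \<Longrightarrow> h \<in> S \<Longrightarrow>
   B h (\<lambda>x. \<Sum>i\<in>I. a i *\<^sub>R e i x) = (\<Sum>i\<in>I. a i * B h (e i))"
  by (simp add: B_sym[of h] combination_mem B_combination_left)

lemma cauchy_schwarz:
  assumes "f \<in> S" "g \<in> S"
  shows "\<bar>B f g\<bar> \<le> sqrt (B f f) * sqrt (B g g)"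
proof -
  have "(B f g)\<^sup>2 \<le> B f f * B g g"
  proof (rule discriminant_le_of_nonneg_quadratic)
    show "0 \<le> B g g" using B_nonneg assms by simp
    fix t
    have tg: "(\<lambda>x. t *\<^sub>R g x) \<in> S" using scale_mem assms by simp
    have "0 \<le> B (\<lambda>x. f x - t *\<^sub>R g x) (\<lambda>x. f x - t *\<^sub>R g x)" using B_nonneg diff_mem tg assms by simp
    also have "\<dots> = B f f - 2 * t * B f g + t\<^sup>2 * B g g"
      using assms tg B_sym[of g f]
      by (simp add: B_diff_left B_diff_right diff_mem B_scale_left B_scale_right
          power2_eq_square algebra_simps)
    finally show "0 \<le> B f f - 2 * t * B f g + t\<^sup>2 * B g g" .
  qed
  then have "sqrt ((B f g)\<^sup>2) \<le> sqrt (B f f * B g g)" by (rule real_sqrt_le_mono)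
  then show ?thesis by (simp add: real_sqrt_mult)
qed

lemma triangle:
  assumes "f \<in> S" "g \<in> S"
  shows "sqrt (B (\<lambda>x. f x + g x) (\<lambda>x. f x + g x)) \<le> sqrt (B f f) + sqrt (B g g)"
proof -
  have "B (\<lambda>x. f x + g x) (\<lambda>x. f x + g x) = B f f + 2 * B f g + B g g"
    using assms by (simp add: B_add_left B_add_right add_mem B_sym[of f g])
  also have "\<dots> \<le> (sqrt (B f f) + sqrt (B g g))\<^sup>2"
    using cauchy_schwarz[OF assms] B_nonneg assms by (simp add: power2_eq_square algebra_simps)
  finally have "sqrt (B (\<lambda>x. f x + g x) (\<lambda>x. f x + g x)) \<le> sqrt ((sqrt (B f f) + sqrt (B g g))\<^sup>2)"
    by (rule real_sqrt_le_mono)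
  then show ?thesis using B_nonneg assms by simp
qed

lemma norm_scale:
  "f \<in> S \<Longrightarrow> sqrt (B (\<lambda>x. c *\<^sub>R f x) (\<lambda>x. c *\<^sub>R f x)) = \<bar>c\<bar> * sqrt (B f f)"
  by (simp add: B_scale_left B_scale_right scale_mem real_sqrt_mult mult.assoc[symmetric])

lemma norm_diff_commute:
  "f \<in> S \<Longrightarrow> g \<in> S \<Longrightarrow>
   sqrt (B (\<lambda>x. f x - g x) (\<lambda>x. f x - g x)) = sqrt (B (\<lambda>x. g x - f x) (\<lambda>x. g x - f x))"
  by (simp add: B_diff_left B_diff_right diff_mem B_sym[of f g])

lemma reverse_triangle:
  assumes "f \<in> S" "g \<in> S"
  shows "\<bar>sqrt (B f f) - sqrt (B g g)\<bar> \<le> sqrt (B (\<lambda>x. f x - g x) (\<lambda>x. f x - g x))"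
proof -
  have "sqrt (B f f) \<le> sqrt (B (\<lambda>x. f x - g x) (\<lambda>x. f x - g x)) + sqrt (B g g)"
    using triangle[of "\<lambda>x. f x - g x" g] assms diff_mem by simp
  moreover have "sqrt (B g g) \<le> sqrt (B (\<lambda>x. g x - f x) (\<lambda>x. g x - f x)) + sqrt (B f f)"
    using triangle[of "\<lambda>x. g x - f x" f] assms diff_mem by simp
  ultimately show ?thesis using norm_diff_commute[OF assms] by linarith
qed

lemma abs_B_diff_right_le:
  assumes "g \<in> S" "e \<in> S" "eh \<in> S"
  shows "\<bar>B g eh - B g e\<bar> \<le> sqrt (B g g) * sqrt (B (\<lambda>x. eh x - e x) (\<lambda>x. eh x - e x))"
  using cauchy_schwarz[of g "\<lambda>x. eh x - e x"] assms by (simp add: diff_mem B_diff_right)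

lemma norm_scaled_diff_le:
  assumes "e \<in> S" "eh \<in> S"
  shows "sqrt (B (\<lambda>x. dh *\<^sub>R eh x - d *\<^sub>R e x) (\<lambda>x. dh *\<^sub>R eh x - d *\<^sub>R e x))
    \<le> \<bar>dh - d\<bar> * sqrt (B eh eh) + \<bar>d\<bar> * sqrt (B (\<lambda>x. eh x - e x) (\<lambda>x. eh x - e x))"
proof -
  have "(\<lambda>x. dh *\<^sub>R eh x - d *\<^sub>R e x) = (\<lambda>x. (dh - d) *\<^sub>R eh x + d *\<^sub>R (eh x - e x))"
    by (simp add: algebra_simps)
  then show ?thesis
    using triangle[of "\<lambda>x. (dh - d) *\<^sub>R eh x" "\<lambda>x. d *\<^sub>R (eh x - e x)"] assms
    by (simp add: scale_mem diff_mem norm_scale)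
qed

lemma B_orthogonal_combination_right:
  assumes "finite I" "\<And>i. i \<in> I \<Longrightarrow> e i \<in> S"
    and orth: "\<And>i l. i \<in> I \<Longrightarrow> l \<in> I \<Longrightarrow> B (e i) (e l) = (if i = l then \<mu> i else 0)"
    and "k \<in> I"
  shows "B (e k) (\<lambda>x. \<Sum>i\<in>I. a i *\<^sub>R e i x) = \<mu> k * a k"
proof -
  have "B (e k) (\<lambda>x. \<Sum>i\<in>I. a i *\<^sub>R e i x) = (\<Sum>i\<in>I. a i * B (e k) (e i))"
    by (rule B_combination_right) (use assms in auto)
  also have "\<dots> = (\<Sum>i\<in>I. if k = i then \<mu> k * a k else 0)"
    using orth \<open>k \<in> I\<close> by (intro sum.cong) auto
  finally show ?thesis using assms by simp
qed

lemma B_orthogonal_combination: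
  assumes "finite I" "\<And>i. i \<in> I \<Longrightarrow> e i \<in> S"
    and "\<And>i l. i \<in> I \<Longrightarrow> l \<in> I \<Longrightarrow> B (e i) (e l) = (if i = l then \<mu> i else 0)"
  shows "B (\<lambda>x. \<Sum>i\<in>I. a i *\<^sub>R e i x) (\<lambda>x. \<Sum>i\<in>I. a i *\<^sub>R e i x) = (\<Sum>i\<in>I. \<mu> i * (a i)\<^sup>2)"
proof -
  have "B (\<lambda>x. \<Sum>i\<in>I. a i *\<^sub>R e i x) (\<lambda>x. \<Sum>i\<in>I. a i *\<^sub>R e i x)
      = (\<Sum>i\<in>I. a i * B (e i) (\<lambda>x. \<Sum>i\<in>I. a i *\<^sub>R e i x))"
    using assms by (intro B_combination_left combination_mem)
  also have "\<dots> = (\<Sum>i\<in>I. \<mu> i * (a i)\<^sup>2)"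
    using B_orthogonal_combination_right[OF assms] by (simp add: power2_eq_square algebra_simps)
  finally show ?thesis .
qed

lemma orthogonal_residual:
  assumes I: "finite I" "\<And>i. i \<in> I \<Longrightarrow> e i \<in> S"
    and orth: "\<And>i l. i \<in> I \<Longrightarrow> l \<in> I \<Longrightarrow> B (e i) (e l) = (if i = l then \<mu> i else 0)"
    and g: "g \<in> S" and coeff: "\<And>i. i \<in> I \<Longrightarrow> B (e i) g = \<mu> i * a i"
  shows "B (\<lambda>x. g x - (\<Sum>i\<in>I. a i *\<^sub>R e i x)) (\<lambda>x. g x - (\<Sum>i\<in>I. a i *\<^sub>R e i x))
         = B g g - (\<Sum>i\<in>I. \<mu> i * (a i)\<^sup>2)"
proof -
  define h where "h = (\<lambda>x. \<Sum>i\<in>I. a i *\<^sub>R e i x)"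
  have h: "h \<in> S" unfolding h_def using I by (rule combination_mem)
  have hg: "B h g = (\<Sum>i\<in>I. \<mu> i * (a i)\<^sup>2)"
    unfolding h_def using I g coeff
    by (simp add: B_combination_left power2_eq_square algebra_simps)
  have hh: "B h h = (\<Sum>i\<in>I. \<mu> i * (a i)\<^sup>2)"
    unfolding h_def using I orth by (rule B_orthogonal_combination)
  show ?thesis
    using g h hg hh B_sym[OF g h] by (simp flip: h_def add: B_diff_left B_diff_right diff_mem)
qed

lemma bessel_inequality:
  assumes "finite I" "\<And>i. i \<in> I \<Longrightarrow> e i \<in> S"
    and "\<And>i l. i \<in> I \<Longrightarrow> l \<in> I \<Longrightarrow> B (e i) (e l) = (if i = l then \<mu> i else 0)"
    and "g \<in> S" and "\<And>i. i \<in> I \<Longrightarrow> B (e i) g = \<mu> i * a i"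
  shows "(\<Sum>i\<in>I. \<mu> i * (a i)\<^sup>2) \<le> B g g"
proof -
  have "(\<lambda>x. g x - (\<Sum>i\<in>I. a i *\<^sub>R e i x)) \<in> S"
    using assms(1,2,4) by (intro diff_mem combination_mem)
  then show ?thesis using orthogonal_residual[OF assms] B_nonneg by fastforce
qed

lemma parseval:
  assumes e: "\<And>i. 1 \<le> i \<Longrightarrow> e i \<in> S"
    and orth: "\<And>i l. 1 \<le> i \<Longrightarrow> 1 \<le> l \<Longrightarrow> B (e i) (e l) = (if i = l then 1 else 0)"
    and g: "g \<in> S"
    and complete: "(\<lambda>N. sqrt (B (\<lambda>x. g x - (\<Sum>i\<in>{1..N}. B g (e i) *\<^sub>R e i x))
                              (\<lambda>x. g x - (\<Sum>i\<in>{1..N}. B g (e i) *\<^sub>R e i x)))) \<longlonglongrightarrow> 0"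
  shows "(\<lambda>N. \<Sum>i\<in>{1..N}. (B g (e i))\<^sup>2) \<longlonglongrightarrow> B g g"
proof -
  have residual: "B (\<lambda>x. g x - (\<Sum>i\<in>{1..N}. B g (e i) *\<^sub>R e i x))
                    (\<lambda>x. g x - (\<Sum>i\<in>{1..N}. B g (e i) *\<^sub>R e i x))
      = B g g - (\<Sum>i\<in>{1..N}. (B g (e i))\<^sup>2)" for N
    using orthogonal_residual[of "{1..N}" e "\<lambda>_. 1" g "\<lambda>i. B g (e i)"] e orth g B_sym
    by simp
  have "(\<lambda>x. g x - (\<Sum>i\<in>{1..N}. B g (e i) *\<^sub>R e i x)) \<in> S" for N
    using e g by (intro diff_mem combination_mem) auto
  then have "(\<lambda>N. B (\<lambda>x. g x - (\<Sum>i\<in>{1..N}. B g (e i) *\<^sub>R e i x))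
               (\<lambda>x. g x - (\<Sum>i\<in>{1..N}. B g (e i) *\<^sub>R e i x))) \<longlonglongrightarrow> 0"
    using tendsto_power[OF complete, of 2] B_nonneg by simp
  then have "(\<lambda>N. B g g - (B g g - (\<Sum>i\<in>{1..N}. (B g (e i))\<^sup>2))) \<longlonglongrightarrow> B g g - 0"
    unfolding residual by (intro tendsto_diff tendsto_const)
  then show ?thesis by simp
qed

lemma continuous_on_B_left:
  fixes f :: "'t::topological_space \<Rightarrow> 'a \<Rightarrow> 'v"
  assumes mem: "\<And>s. s \<in> X \<Longrightarrow> f s \<in> S" and e: "e \<in> S"
    and cont: "\<And>s. s \<in> X \<Longrightarrow>
      ((\<lambda>r. sqrt (B (\<lambda>x. f r x - f s x) (\<lambda>x. f r x - f s x))) \<longlongrightarrow> 0) (at s within X)"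
  shows "continuous_on X (\<lambda>s. B (f s) e)"
proof (rule continuous_on_of_modulus
    [where G = "\<lambda>r s. sqrt (B (\<lambda>x. f r x - f s x) (\<lambda>x. f r x - f s x)) * sqrt (B e e)"])
  fix s assume "s \<in> X"
  show "((\<lambda>r. sqrt (B (\<lambda>x. f r x - f s x) (\<lambda>x. f r x - f s x)) * sqrt (B e e)) \<longlongrightarrow> 0)
    (at s within X)" using cont[OF \<open>s \<in> X\<close>] by (rule tendsto_mult_left_zero)
next
  fix r s assume "r \<in> X" "s \<in> X"
  then show "\<bar>B (f r) e - B (f s) e\<bar>
    \<le> sqrt (B (\<lambda>x. f r x - f s x) (\<lambda>x. f r x - f s x)) * sqrt (B e e)"
    using cauchy_schwarz[of "\<lambda>x. f r x - f s x" e] mem e by (simp add: diff_mem B_diff_left)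
qed

lemma continuous_on_norm:
  fixes f :: "'t::topological_space \<Rightarrow> 'a \<Rightarrow> 'v"
  assumes mem: "\<And>s. s \<in> X \<Longrightarrow> f s \<in> S"
    and cont: "\<And>s. s \<in> X \<Longrightarrow>
      ((\<lambda>r. sqrt (B (\<lambda>x. f r x - f s x) (\<lambda>x. f r x - f s x))) \<longlongrightarrow> 0) (at s within X)"
  shows "continuous_on X (\<lambda>s. sqrt (B (f s) (f s)))"
  using cont
proof (rule continuous_on_of_modulus)
  fix r s assume "r \<in> X" "s \<in> X"
  then show "\<bar>sqrt (B (f r) (f r)) - sqrt (B (f s) (f s))\<bar>
    \<le> sqrt (B (\<lambda>x. f r x - f s x) (\<lambda>x. f r x - f s x))" by (intro reverse_triangle mem)
qed


lemma modal_error_le: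
  fixes f :: "real \<Rightarrow> 'a \<Rightarrow> 'v"
  assumes e: "e \<in> S" "B e e = 1" and eh: "eh \<in> S" "B eh eh = 1"
    and \<omega>: "0 < \<omega>" "\<omega> \<le> \<omega>h" and t: "0 \<le> t" and u0: "u0 \<in> S" and v0: "v0 \<in> S"
    and f: "\<And>s. s \<in> {0..t} \<Longrightarrow> f s \<in> S"
    and f_cont: "\<And>s. s \<in> {0..t} \<Longrightarrow>
      ((\<lambda>r. sqrt (B (\<lambda>x. f r x - f s x) (\<lambda>x. f r x - f s x))) \<longlongrightarrow> 0) (at s within {0..t})"
  shows
    "let d = modal_coeff \<omega> (B u0 e) (B v0 e) (\<lambda>\<tau>. B (f \<tau>) e) t;
         dh = modal_coeff \<omega>h (B u0 eh) (B v0 eh) (\<lambda>\<tau>. B (f \<tau>) eh) t;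
         \<delta> = sqrt (B (\<lambda>x. eh x - e x) (\<lambda>x. eh x - e x))
     in sqrt (B (\<lambda>x. dh *\<^sub>R eh x - d *\<^sub>R e x) (\<lambda>x. dh *\<^sub>R eh x - d *\<^sub>R e x))
        \<le> sqrt (B u0 u0) * (2 * \<delta> + \<bar>cos (\<omega>h * t) - cos (\<omega> * t)\<bar>)
          + sqrt (B v0 v0) / \<omega> * ((\<omega>h - \<omega>) / \<omega> + 2 * \<delta> + \<bar>sin (\<omega>h * t) - sin (\<omega> * t)\<bar>)
          + 1 / \<omega> * integral {0..t} (\<lambda>\<tau>. sqrt (B (f \<tau>) (f \<tau>)))
              * ((\<omega>h - \<omega>) / \<omega> + 2 * \<delta> + (SUP \<tau>\<in>{0..t}. \<bar>sin (\<omega>h * \<tau>) - sin (\<omega> * \<tau>)\<bar>))"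
proof -
  define \<delta> where "\<delta> = sqrt (B (\<lambda>x. eh x - e x) (\<lambda>x. eh x - e x))"
  define d where "d = modal_coeff \<omega> (B u0 e) (B v0 e) (\<lambda>\<tau>. B (f \<tau>) e) t"
  define dh where "dh = modal_coeff \<omega>h (B u0 eh) (B v0 eh) (\<lambda>\<tau>. B (f \<tau>) eh) t"
  have \<delta>: "0 \<le> \<delta>" using B_nonneg[OF diff_mem] e eh by (simp add: \<delta>_def)
  have coeff: "\<bar>B g e\<bar> \<le> sqrt (B g g)" "\<bar>B g eh - B g e\<bar> \<le> sqrt (B g g) * \<delta>" if "g \<in> S" for g
    using cauchy_schwarz[of g e] abs_B_diff_right_le[of g e eh] that e eh by (auto simp: \<delta>_def)
  have cont: "continuous_on {0..t} (\<lambda>\<tau>. B (f \<tau>) e)" "continuous_on {0..t} (\<lambda>\<tau>. B (f \<tau>) eh)"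
    "continuous_on {0..t} (\<lambda>\<tau>. sqrt (B (f \<tau>) (f \<tau>)))"
    using f e(1) eh(1) f_cont by (blast intro: continuous_on_B_left continuous_on_norm)+
  have "\<bar>dh - d\<bar> + \<bar>d\<bar> * \<delta> \<le> sqrt (B u0 u0) * (2 * \<delta> + \<bar>cos (\<omega>h * t) - cos (\<omega> * t)\<bar>)
      + sqrt (B v0 v0) / \<omega> * ((\<omega>h - \<omega>) / \<omega> + 2 * \<delta> + \<bar>sin (\<omega>h * t) - sin (\<omega> * t)\<bar>)
      + 1 / \<omega> * integral {0..t} (\<lambda>\<tau>. sqrt (B (f \<tau>) (f \<tau>)))
          * ((\<omega>h - \<omega>) / \<omega> + 2 * \<delta> + (SUP \<tau>\<in>{0..t}. \<bar>sin (\<omega>h * \<tau>) - sin (\<omega> * \<tau>)\<bar>))"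
    unfolding d_def dh_def
    by (rule modal_coeff_error[OF \<omega> t \<delta> coeff[OF u0] coeff[OF v0] cont]) (use coeff f in auto)
  moreover have "sqrt (B (\<lambda>x. dh *\<^sub>R eh x - d *\<^sub>R e x) (\<lambda>x. dh *\<^sub>R eh x - d *\<^sub>R e x))
      \<le> \<bar>dh - d\<bar> + \<bar>d\<bar> * \<delta>"
    using norm_scaled_diff_le[OF e(1) eh(1), of dh d] eh(2) by (simp add: \<delta>_def)
  ultimately show ?thesis unfolding Let_def d_def dh_def \<delta>_def by linarith
qed

end

section \<open>Square-integrable functions and gradient fields\<close>

lemma L2_iff:
  "L2 \<Omega> u \<longleftrightarrow> (\<lambda>x. indicator \<Omega> x * u x) \<in> borel_measurable lborel \<and>
    integrable lborel (\<lambda>x. indicator \<Omega> x * (u x)\<^sup>2)"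
  by (simp add: L2_def set_borel_measurable_def set_integrable_def)

lemma l2inner_eq_integral: "l2inner \<Omega> u v = integral\<^sup>L lborel (\<lambda>x. indicator \<Omega> x * (u x * v x))"
  by (simp add: l2inner_def set_lebesgue_integral_def)

lemma L2_borel_measurable: "L2 \<Omega> u \<Longrightarrow> (\<lambda>x. indicator \<Omega> x * u x) \<in> borel_measurable lborel"
  by (simp add: L2_iff)

lemma integrable_L2_product:
  assumes "L2 \<Omega> u" "L2 \<Omega> v"
  shows "integrable lborel (\<lambda>x. indicator \<Omega> x * (u x * v x))"
proof (rule Bochner_Integration.integrable_bound)
  show "integrable lborel (\<lambda>x. indicator \<Omega> x * (u x)\<^sup>2 + indicator \<Omega> x * (v x)\<^sup>2)"
    using assms by (simp add: L2_iff)
  have "(\<lambda>x. (indicator \<Omega> x * u x) * (indicator \<Omega> x * v x)) \<in> borel_measurable lborel"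
    using assms by (intro borel_measurable_times L2_borel_measurable)
  moreover have "(\<lambda>x. (indicator \<Omega> x * u x) * (indicator \<Omega> x * v x))
      = (\<lambda>x. indicator \<Omega> x * (u x * v x))"
    by (auto simp: indicator_def)
  ultimately show "(\<lambda>x. indicator \<Omega> x * (u x * v x)) \<in> borel_measurable lborel" by simp
  show "AE x in lborel. norm (indicator \<Omega> x * (u x * v x))
          \<le> norm (indicator \<Omega> x * (u x)\<^sup>2 + indicator \<Omega> x * (v x)\<^sup>2)"
  proof (rule AE_I2)
    fix x
    have "2 * (\<bar>u x\<bar> * \<bar>v x\<bar>) \<le> (u x)\<^sup>2 + (v x)\<^sup>2"
      using sum_squares_bound[of "\<bar>u x\<bar>" "\<bar>v x\<bar>"] by (simp add: mult.assoc)
    then have "\<bar>u x * v x\<bar> \<le> (u x)\<^sup>2 + (v x)\<^sup>2"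
      unfolding abs_mult using zero_le_mult_iff[of "\<bar>u x\<bar>" "\<bar>v x\<bar>"] by linarith
    then show "norm (indicator \<Omega> x * (u x * v x))
        \<le> norm (indicator \<Omega> x * (u x)\<^sup>2 + indicator \<Omega> x * (v x)\<^sup>2)"
      by (auto simp: indicator_def)
  qed
qed

lemma L2_add:
  assumes "L2 \<Omega> u" "L2 \<Omega> v"
  shows "L2 \<Omega> (\<lambda>x. u x + v x)"
proof -
  have "(\<lambda>x. indicator \<Omega> x * u x + indicator \<Omega> x * v x) \<in> borel_measurable lborel"
    using assms by (intro borel_measurable_add L2_borel_measurable)
  moreover have "integrable lborel (\<lambda>x. indicator \<Omega> x * (u x)\<^sup>2
      + 2 * (indicator \<Omega> x * (u x * v x)) + indicator \<Omega> x * (v x)\<^sup>2)"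
    using assms integrable_L2_product[OF assms] by (simp add: L2_iff)
  moreover have "(\<lambda>x. indicator \<Omega> x * (u x)\<^sup>2 + 2 * (indicator \<Omega> x * (u x * v x))
      + indicator \<Omega> x * (v x)\<^sup>2) = (\<lambda>x. indicator \<Omega> x * (u x + v x)\<^sup>2)"
    by (auto simp: power2_eq_square algebra_simps)
  ultimately show ?thesis by (simp add: L2_iff distrib_left)
qed

lemma L2_scale:
  assumes "L2 \<Omega> u"
  shows "L2 \<Omega> (\<lambda>x. c * u x)"
proof -
  have "(\<lambda>x. c * (indicator \<Omega> x * u x)) \<in> borel_measurable lborel"
    using assms by (intro borel_measurable_times borel_measurable_const L2_borel_measurable)
  moreover have "integrable lborel (\<lambda>x. c\<^sup>2 * (indicator \<Omega> x * (u x)\<^sup>2))"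
    using assms by (simp add: L2_iff)
  ultimately show ?thesis by (simp add: L2_iff power_mult_distrib algebra_simps)
qed

lemma l2inner_commute: "l2inner \<Omega> u v = l2inner \<Omega> v u"
  by (simp add: l2inner_def mult.commute)

lemma L2_semi_inner_product: "semi_inner_product {w. L2 \<Omega> w} (l2inner \<Omega>)"
proof
  show "(\<lambda>x. 0) \<in> {w. L2 \<Omega> w}" by (simp add: L2_iff)
next
  fix f g h assume "f \<in> {w. L2 \<Omega> w}" "g \<in> {w. L2 \<Omega> w}" "h \<in> {w. L2 \<Omega> w}"
  then show "l2inner \<Omega> (\<lambda>x. f x + g x) h = l2inner \<Omega> f h + l2inner \<Omega> g h"
    by (simp add: l2inner_eq_integral integrable_L2_product distrib_left distrib_right)
next
  fix f show "0 \<le> l2inner \<Omega> f f" unfolding l2inner_eq_integral by (rule integral_nonneg_AE) auto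
qed (auto simp: L2_add L2_scale l2inner_eq_integral mult.commute mult.left_commute)

interpretation L2: semi_inner_product "{w. L2 \<Omega> w}" "l2inner \<Omega>" for \<Omega>
  by (rule L2_semi_inner_product)

text \<open>Since \<open>wgrad\<close> chooses an arbitrary weak gradient, \<open>agrad\<close> is not known to be bilinear;
  linear combinations are therefore formed on the gradient fields themselves.\<close>

definition grad_fields :: "(real^'d) set \<Rightarrow> (real^'d \<Rightarrow> real^'d) set" where
  "grad_fields \<Omega> = {G. \<forall>i. L2 \<Omega> (\<lambda>x. G x $ i)}"

definition grad_inner :: "(real^'d) set \<Rightarrow> (real^'d \<Rightarrow> real^'d) \<Rightarrow> (real^'d \<Rightarrow> real^'d) \<Rightarrow> real" where
  "grad_inner \<Omega> G H = (\<Sum>i\<in>UNIV. l2inner \<Omega> (\<lambda>x. G x $ i) (\<lambda>x. H x $ i))"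

lemma grad_semi_inner_product: "semi_inner_product (grad_fields \<Omega>) (grad_inner \<Omega>)"
proof
  fix f g h assume "f \<in> grad_fields \<Omega>" "g \<in> grad_fields \<Omega>" "h \<in> grad_fields \<Omega>"
  then show "grad_inner \<Omega> (\<lambda>x. f x + g x) h = grad_inner \<Omega> f h + grad_inner \<Omega> g h"
    using L2.B_add_left[where f = "\<lambda>x. f x $ i" and g = "\<lambda>x. g x $ i" and h = "\<lambda>x. h x $ i" for i]
    by (simp add: grad_fields_def grad_inner_def sum.distrib)
next
  fix f h c assume "f \<in> grad_fields \<Omega>" "h \<in> grad_fields \<Omega>"
  then show "grad_inner \<Omega> (\<lambda>x. c *\<^sub>R f x) h = c * grad_inner \<Omega> f h"
    using L2.B_scale_left[where f = "\<lambda>x. f x $ i" and h = "\<lambda>x. h x $ i" for i]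
    by (simp add: grad_fields_def grad_inner_def sum_distrib_left)
next
  fix f g assume "f \<in> grad_fields \<Omega>" "g \<in> grad_fields \<Omega>"
  then show "grad_inner \<Omega> f g = grad_inner \<Omega> g f"
    by (simp add: grad_inner_def l2inner_commute)
next
  fix f assume "f \<in> grad_fields \<Omega>"
  then show "0 \<le> grad_inner \<Omega> f f"
    using L2.B_nonneg by (auto simp: grad_fields_def grad_inner_def intro: sum_nonneg)
qed (use L2.zero_mem in \<open>auto simp: grad_fields_def intro: L2_add L2_scale\<close>)

interpretation grad: semi_inner_product "grad_fields \<Omega>" "grad_inner \<Omega>" for \<Omega>
  by (rule grad_semi_inner_product)

lemma weak_grad_wgrad: "H1 \<Omega> u \<Longrightarrow> weak_grad \<Omega> u (wgrad \<Omega> u)"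
  unfolding H1_def wgrad_def by (auto intro: someI[of "weak_grad \<Omega> u"])

lemma wgrad_mem_grad_fields: "H1 \<Omega> u \<Longrightarrow> wgrad \<Omega> u \<in> grad_fields \<Omega>"
  using weak_grad_wgrad[of \<Omega> u] by (simp add: weak_grad_def grad_fields_def)

lemma agrad_eq_grad_inner:
  assumes "H1 \<Omega> u" "H1 \<Omega> v"
  shows "agrad \<Omega> u v = grad_inner \<Omega> (wgrad \<Omega> u) (wgrad \<Omega> v)"
proof -
  have L2: "\<And>i. L2 \<Omega> (\<lambda>x. wgrad \<Omega> u x $ i)" "\<And>i. L2 \<Omega> (\<lambda>x. wgrad \<Omega> v x $ i)"
    using wgrad_mem_grad_fields[OF assms(1)] wgrad_mem_grad_fields[OF assms(2)]
    by (auto simp: grad_fields_def)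
  have "agrad \<Omega> u v
      = integral\<^sup>L lborel (\<lambda>x. \<Sum>i\<in>UNIV. indicator \<Omega> x * (wgrad \<Omega> u x $ i * wgrad \<Omega> v x $ i))"
    by (simp add: agrad_def set_lebesgue_integral_def inner_vec_def sum_distrib_left)
  also have "\<dots> = (\<Sum>i\<in>UNIV. integral\<^sup>L lborel
                     (\<lambda>x. indicator \<Omega> x * (wgrad \<Omega> u x $ i * wgrad \<Omega> v x $ i)))"
    using integrable_L2_product[OF L2] by (rule Bochner_Integration.integral_sum)
  finally show ?thesis by (simp add: grad_inner_def l2inner_eq_integral)
qed

section \<open>Galerkin eigenvalues bound the exact ones from above\<close>

lemma homogeneous_system_nontrivial_solution:
  fixes a :: "nat \<Rightarrow> nat \<Rightarrow> real"
  assumes "finite K" "m < card K"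
  shows "\<exists>c. (\<exists>k\<in>K. c k \<noteq> 0) \<and> (\<forall>i<m. (\<Sum>k\<in>K. a i k * c k) = 0)"
  using assms
proof (induction m arbitrary: K a)
  case 0
  then obtain p where "p \<in> K" by (metis card.empty ex_in_conv less_zeroE)
  then show ?case by (intro exI[of _ "\<lambda>_. 1"]) auto
next
  case (Suc m)
  show ?case
  proof (cases "\<forall>k\<in>K. a m k = 0")
    case True
    from Suc.prems have "m < card K" by simp
    with Suc.IH[OF Suc.prems(1)] obtain c
      where "\<exists>k\<in>K. c k \<noteq> 0" "\<forall>i<m. (\<Sum>k\<in>K. a i k * c k) = 0" by blast
    with True show ?thesis by (auto simp: less_Suc_eq)
  next
    case False
    then obtain p where p: "p \<in> K" "a m p \<noteq> 0" by auto
    \<comment> \<open>Gaussian elimination: use equation \<open>m\<close> to eliminate the unknown \<open>p\<close>.\<close>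
    define a' where "a' i k = a i k - (a i p / a m p) * a m k" for i k
    have "m < card (K - {p})" using Suc.prems p by simp
    with Suc.IH[of "K - {p}" a'] Suc.prems(1) obtain c' where c':
      "\<exists>k\<in>K - {p}. c' k \<noteq> 0" "\<forall>i<m. (\<Sum>k\<in>K - {p}. a' i k * c' k) = 0" by auto
    define s where "s = (\<Sum>k\<in>K - {p}. a m k * c' k)"
    define c where "c = c'(p := - s / a m p)"
    have split: "(\<Sum>k\<in>K. a i k * c k) = a i p * c p + (\<Sum>k\<in>K - {p}. a i k * c' k)" for i
      using Suc.prems(1) p(1) unfolding c_def by (simp add: sum.remove)
    have "(\<Sum>k\<in>K. a i k * c k) = 0" if "i < Suc m" for i
    proof (cases "i = m")
      case True
      then show ?thesis using split[of m] p(2) by (simp add: c_def s_def)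
    next
      case False
      have "(\<Sum>k\<in>K - {p}. a' i k * c' k) = (\<Sum>k\<in>K - {p}. a i k * c' k) - (a i p / a m p) * s"
        by (simp add: a'_def s_def algebra_simps sum_subtractf sum_distrib_left)
      with c'(2) False that show ?thesis using split[of i] p(2) by (simp add: c_def)
    qed
    moreover have "\<exists>k\<in>K. c k \<noteq> 0" using c'(1) by (auto simp: c_def)
    ultimately show ?thesis by blast
  qed
qed

lemma galerkin_combination_energy_bound:
  fixes \<Omega> :: "(real^'d) set" and V :: "(real^'d \<Rightarrow> real) set"
    and lam lamh :: "nat \<Rightarrow> real" and u uh :: "nat \<Rightarrow> real^'d \<Rightarrow> real"
  assumes H1: "\<forall>v\<in>V. H1 \<Omega> v"
    and eig_mem: "\<And>i. i \<ge> 1 \<Longrightarrow> u i \<in> V"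
    and eig_eq: "\<And>i v. i \<ge> 1 \<Longrightarrow> v \<in> V \<Longrightarrow> agrad \<Omega> (u i) v = lam i * l2inner \<Omega> (u i) v"
    and eig_on: "\<And>i k. i \<ge> 1 \<Longrightarrow> k \<ge> 1 \<Longrightarrow> l2inner \<Omega> (u i) (u k) = (if i = k then 1 else 0)"
    and deig_mem: "\<And>k. k \<in> {1..j} \<Longrightarrow> uh k \<in> V"
    and deig_eq: "\<And>k l. k \<in> {1..j} \<Longrightarrow> l \<in> {1..j} \<Longrightarrow>
          agrad \<Omega> (uh k) (uh l) = lamh k * l2inner \<Omega> (uh k) (uh l)"
    and deig_le: "\<And>k. k \<in> {1..j} \<Longrightarrow> lamh k \<le> lamh j"
    and deig_on: "\<And>k l. k \<in> {1..j} \<Longrightarrow> l \<in> {1..j} \<Longrightarrow>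
          l2inner \<Omega> (uh k) (uh l) = (if k = l then 1 else 0)"
  shows "(\<Sum>i\<in>{1..N}. lam i * (l2inner \<Omega> (\<lambda>x. \<Sum>k\<in>{1..j}. c k *\<^sub>R uh k x) (u i))\<^sup>2)
    \<le> lamh j * (\<Sum>k\<in>{1..j}. (c k)\<^sup>2)"
proof -
  have Hu: "H1 \<Omega> (u i)" if "i \<ge> 1" for i using H1 eig_mem[OF that] by blast
  have Huh: "H1 \<Omega> (uh k)" if "k \<in> {1..j}" for k using H1 deig_mem[OF that] by blast
  have grad_u: "wgrad \<Omega> (u i) \<in> grad_fields \<Omega>" if "i \<ge> 1" for i
    using wgrad_mem_grad_fields[OF Hu[OF that]] .
  have grad_uh: "wgrad \<Omega> (uh k) \<in> grad_fields \<Omega>" if "k \<in> {1..j}" for k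
    using wgrad_mem_grad_fields[OF Huh[OF that]] .
  define G where "G = (\<lambda>x. \<Sum>k\<in>{1..j}. c k *\<^sub>R wgrad \<Omega> (uh k) x)"
  have G: "G \<in> grad_fields \<Omega>" unfolding G_def using grad_uh by (intro grad.combination_mem) auto
  have "(\<Sum>i\<in>{1..N}. lam i * (l2inner \<Omega> (\<lambda>x. \<Sum>k\<in>{1..j}. c k *\<^sub>R uh k x) (u i))\<^sup>2)
      \<le> grad_inner \<Omega> G G"
  proof (rule grad.bessel_inequality[OF _ _ _ G])
    fix i l assume "i \<in> {1..N}" "l \<in> {1..N}"
    then show "grad_inner \<Omega> (wgrad \<Omega> (u i)) (wgrad \<Omega> (u l)) = (if i = l then lam i else 0)"
      using eig_eq eig_mem eig_on by (simp add: agrad_eq_grad_inner[symmetric] Hu)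
  next
    fix i assume i: "i \<in> {1..N}"
    have "grad_inner \<Omega> (wgrad \<Omega> (u i)) G
        = (\<Sum>k\<in>{1..j}. c k * grad_inner \<Omega> (wgrad \<Omega> (u i)) (wgrad \<Omega> (uh k)))"
      unfolding G_def using grad_uh grad_u i by (intro grad.B_combination_right) auto
    also have "\<dots> = lam i * l2inner \<Omega> (\<lambda>x. \<Sum>k\<in>{1..j}. c k *\<^sub>R uh k x) (u i)"
      using i eig_eq deig_mem Hu Huh L2.B_combination_left[of "{1..j}" uh \<Omega> "u i" c]
      by (simp add: agrad_eq_grad_inner[symmetric] H1_def sum_distrib_left algebra_simps
          l2inner_commute[of _ "uh _"])
    finally show "grad_inner \<Omega> (wgrad \<Omega> (u i)) G
        = lam i * l2inner \<Omega> (\<lambda>x. \<Sum>k\<in>{1..j}. c k *\<^sub>R uh k x) (u i)" .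
  qed (use grad_u in auto)
  also have "grad_inner \<Omega> G G = (\<Sum>k\<in>{1..j}. lamh k * (c k)\<^sup>2)"
    unfolding G_def using grad_uh deig_eq deig_on
    by (intro grad.B_orthogonal_combination) (auto simp: agrad_eq_grad_inner[symmetric] Huh)
  also have "\<dots> \<le> lamh j * (\<Sum>k\<in>{1..j}. (c k)\<^sup>2)"
    unfolding sum_distrib_left using deig_le by (intro sum_mono mult_right_mono) auto
  finally show ?thesis .
qed

text \<open>Min--max principle: a combination \<open>w\<close> of the first \<open>j\<close> discrete eigenfunctions that is
  orthogonal to \<open>u 1, \<dots>, u (j - 1)\<close> has Rayleigh quotient at least \<open>lam j\<close> and at most \<open>lamh j\<close>.\<close>

lemma eigenvalue_le_galerkin_eigenvalue:
  fixes \<Omega> :: "(real^'d) set" and V :: "(real^'d \<Rightarrow> real) set"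
    and lam lamh :: "nat \<Rightarrow> real" and u uh :: "nat \<Rightarrow> real^'d \<Rightarrow> real"
  assumes H1: "\<forall>v\<in>V. H1 \<Omega> v"
    and eig_mem: "\<And>i. i \<ge> 1 \<Longrightarrow> u i \<in> V"
    and eig_eq: "\<And>i v. i \<ge> 1 \<Longrightarrow> v \<in> V \<Longrightarrow> agrad \<Omega> (u i) v = lam i * l2inner \<Omega> (u i) v"
    and eig_ge: "\<And>i. j \<le> i \<Longrightarrow> lam j \<le> lam i"
    and eig_on: "\<And>i k. i \<ge> 1 \<Longrightarrow> k \<ge> 1 \<Longrightarrow> l2inner \<Omega> (u i) (u k) = (if i = k then 1 else 0)"
    and eig_basis: "\<And>w. L2 \<Omega> w \<Longrightarrow>
          (\<lambda>N. l2norm \<Omega> (\<lambda>x. w x - (\<Sum>i\<in>{1..N}. l2inner \<Omega> w (u i) * u i x))) \<longlonglongrightarrow> 0"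
    and deig_mem: "\<And>k. k \<in> {1..j} \<Longrightarrow> uh k \<in> V"
    and deig_eq: "\<And>k l. k \<in> {1..j} \<Longrightarrow> l \<in> {1..j} \<Longrightarrow>
          agrad \<Omega> (uh k) (uh l) = lamh k * l2inner \<Omega> (uh k) (uh l)"
    and deig_le: "\<And>k. k \<in> {1..j} \<Longrightarrow> lamh k \<le> lamh j"
    and deig_on: "\<And>k l. k \<in> {1..j} \<Longrightarrow> l \<in> {1..j} \<Longrightarrow>
          l2inner \<Omega> (uh k) (uh l) = (if k = l then 1 else 0)"
    and j: "1 \<le> j"
  shows "lam j \<le> lamh j"
proof -
  have Lu: "L2 \<Omega> (u i)" if "i \<ge> 1" for i using H1 eig_mem[OF that] by (simp add: H1_def)
  have Luh: "L2 \<Omega> (uh k)" if "k \<in> {1..j}" for k using H1 deig_mem[OF that] by (simp add: H1_def)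
  obtain c where c: "\<exists>k\<in>{1..j}. c k \<noteq> 0"
    and c_orth: "\<forall>i<j - 1. (\<Sum>k\<in>{1..j}. l2inner \<Omega> (u (Suc i)) (uh k) * c k) = 0"
    using homogeneous_system_nontrivial_solution
        [where K = "{1..j}" and m = "j - 1" and a = "\<lambda>i k. l2inner \<Omega> (u (Suc i)) (uh k)"] j
    by auto
  define w where "w = (\<lambda>x. \<Sum>k\<in>{1..j}. c k *\<^sub>R uh k x)"
  define a where "a i = l2inner \<Omega> w (u i)" for i
  define W where "W = (\<Sum>k\<in>{1..j}. (c k)\<^sup>2)"
  have Lw: "L2 \<Omega> w" unfolding w_def using L2.combination_mem[of "{1..j}" uh \<Omega> c] Luh by simp
  have a_low: "a i = 0" if "1 \<le> i" "i < j" for i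
  proof -
    have "a i = (\<Sum>k\<in>{1..j}. c k * l2inner \<Omega> (u i) (uh k))"
      unfolding a_def w_def using L2.B_combination_left[of "{1..j}" uh \<Omega> "u i"] Luh Lu that
      by (simp add: l2inner_commute[of _ "uh _"])
    then show ?thesis using c_orth[rule_format, of "i - 1"] that by (simp add: mult.commute)
  qed
  have W_pos: "0 < W"
  proof -
    from c obtain k where "k \<in> {1..j}" "c k \<noteq> 0" by blast
    then show ?thesis unfolding W_def by (intro sum_pos2[of _ k]) auto
  qed
  have partial: "lam j * (\<Sum>i\<in>{1..N}. (a i)\<^sup>2) \<le> lamh j * W" for N
  proof -
    have "lam j * (\<Sum>i\<in>{1..N}. (a i)\<^sup>2) \<le> (\<Sum>i\<in>{1..N}. lam i * (a i)\<^sup>2)"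
      unfolding sum_distrib_left
      by (intro sum_mono) (use a_low eig_ge in \<open>force intro: mult_right_mono\<close>)
    also have "\<dots> \<le> lamh j * W"
      unfolding a_def w_def W_def
      by (rule galerkin_combination_energy_bound[OF H1 eig_mem eig_eq eig_on deig_mem deig_eq deig_le deig_on])
    finally show ?thesis .
  qed
  have "l2inner \<Omega> w w = W"
    unfolding w_def W_def using L2.B_orthogonal_combination[of "{1..j}" uh \<Omega> "\<lambda>_. 1" c] Luh deig_on
    by simp
  then have "(\<lambda>N. \<Sum>i\<in>{1..N}. (a i)\<^sup>2) \<longlonglongrightarrow> W"
    unfolding a_def using L2.parseval[of u \<Omega> w] Lu eig_on Lw eig_basis[OF Lw]
    by (simp add: l2norm_def)
  then have "(\<lambda>N. lam j * (\<Sum>i\<in>{1..N}. (a i)\<^sup>2)) \<longlonglongrightarrow> lam j * W"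
    by (rule tendsto_mult_left)
  then have "lam j * W \<le> lamh j * W"
    using partial by (intro LIMSEQ_le_const2) auto
  with W_pos show ?thesis by simp
qed

theorem theorem4p3:
  fixes \<Omega> :: "(real^'d) set"
    and V Vh :: "(real^'d \<Rightarrow> real) set"
    and n :: nat and T :: real
    and lam :: "nat \<Rightarrow> real" and u :: "nat \<Rightarrow> real^'d \<Rightarrow> real"
    and lamh :: "nat \<Rightarrow> real" and uh :: "nat \<Rightarrow> real^'d \<Rightarrow> real"
    and u0 v0 :: "real^'d \<Rightarrow> real" and f :: "real \<Rightarrow> real^'d \<Rightarrow> real"
    and j :: nat and t :: real
  assumes \<Omega>: "open \<Omega>" "connected \<Omega>" "\<Omega> \<noteq> {}"
    and T: "T > 0"
    and V: "closed_H1_subspace \<Omega> V"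
    and eig_mem: "\<And>i. i \<ge> 1 \<Longrightarrow> u i \<in> V"
    and eig_eq: "\<And>i v. i \<ge> 1 \<Longrightarrow> v \<in> V \<Longrightarrow> agrad \<Omega> (u i) v = lam i * l2inner \<Omega> (u i) v"
    and eig_pos: "0 < lam 1"
    and eig_mono: "\<And>i. i \<ge> 1 \<Longrightarrow> lam i \<le> lam (Suc i)"
    and eig_on: "\<And>i k. i \<ge> 1 \<Longrightarrow> k \<ge> 1 \<Longrightarrow> l2inner \<Omega> (u i) (u k) = (if i = k then 1 else 0)"
    and eig_basis: "\<And>w. L2 \<Omega> w \<Longrightarrow>
          (\<lambda>N. l2norm \<Omega> (\<lambda>x. w x - (\<Sum>i\<in>{1..N}. l2inner \<Omega> w (u i) * u i x))) \<longlonglongrightarrow> 0"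
    and Vh_sub: "Vh \<subseteq> V"
    and Vh: "galerkin_space \<Omega> V n Vh"
    and deig_mem: "\<And>i. i \<in> {1..n} \<Longrightarrow> uh i \<in> Vh"
    and deig_eq: "\<And>i v. i \<in> {1..n} \<Longrightarrow> v \<in> Vh \<Longrightarrow> agrad \<Omega> (uh i) v = lamh i * l2inner \<Omega> (uh i) v"
    and deig_pos: "n \<ge> 1 \<Longrightarrow> 0 < lamh 1"
    and deig_mono: "\<And>i. i \<in> {1..<n} \<Longrightarrow> lamh i \<le> lamh (Suc i)"
    and deig_on: "\<And>i k. i \<in> {1..n} \<Longrightarrow> k \<in> {1..n} \<Longrightarrow>
          l2inner \<Omega> (uh i) (uh k) = (if i = k then 1 else 0)"
    and u0: "L2 \<Omega> u0" and v0: "L2 \<Omega> v0"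
    and f_L2: "\<And>s. s \<in> {0..T} \<Longrightarrow> L2 \<Omega> (f s)"
    and f_cont: "\<And>s. s \<in> {0..T} \<Longrightarrow>
          ((\<lambda>r. l2norm \<Omega> (\<lambda>x. f r x - f s x)) \<longlongrightarrow> 0) (at s within {0..T})"
    and j: "j \<in> {1..n}" and t: "t \<in> {0..T}"
  shows
    "let \<omega> = sqrt (lam j); \<omega>h = sqrt (lamh j);
         d = modal_coeff \<omega> (l2inner \<Omega> u0 (u j)) (l2inner \<Omega> v0 (u j))
               (\<lambda>\<tau>. l2inner \<Omega> (f \<tau>) (u j)) t;
         dh = modal_coeff \<omega>h (l2inner \<Omega> u0 (uh j)) (l2inner \<Omega> v0 (uh j))
               (\<lambda>\<tau>. l2inner \<Omega> (f \<tau>) (uh j)) t;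
         \<delta> = l2norm \<Omega> (\<lambda>x. uh j x - u j x)
     in l2norm \<Omega> (\<lambda>x. dh * uh j x - d * u j x)
        \<le> l2norm \<Omega> u0 * (2 * \<delta> + \<bar>cos (\<omega>h * t) - cos (\<omega> * t)\<bar>)
          + l2norm \<Omega> v0 / \<omega> * ((\<omega>h - \<omega>) / \<omega> + 2 * \<delta> + \<bar>sin (\<omega>h * t) - sin (\<omega> * t)\<bar>)
          + 1 / \<omega> * integral {0..t} (\<lambda>\<tau>. l2norm \<Omega> (f \<tau>))
              * ((\<omega>h - \<omega>) / \<omega> + 2 * \<delta>
                 + (SUP \<tau>\<in>{0..t}. \<bar>sin (\<omega>h * \<tau>) - sin (\<omega> * \<tau>)\<bar>))"
proof -
  have j1: "1 \<le> j" "j \<le> n" using j by auto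
  have H1V: "\<forall>v\<in>V. H1 \<Omega> v" using V unfolding closed_H1_subspace_def by (rule conjunct1)
  have uh_V: "uh k \<in> V" if "k \<in> {1..n}" for k using Vh_sub deig_mem[OF that] by blast
  have lam_ge: "lam i \<le> lam i'" if "1 \<le> i" "i \<le> i'" for i i'
    using lift_Suc_mono_le_ivl[of "{1..}" lam i i'] eig_mono that by (auto simp: subset_eq)
  have lam_le: "lam j \<le> lamh j"
  proof (rule eigenvalue_le_galerkin_eigenvalue[OF H1V eig_mem eig_eq _ eig_on eig_basis _ _ _ _ j1(1)])
    fix k l assume k: "k \<in> {1..j}" and l: "l \<in> {1..j}"
    then show "agrad \<Omega> (uh k) (uh l) = lamh k * l2inner \<Omega> (uh k) (uh l)"
      and "l2inner \<Omega> (uh k) (uh l) = (if k = l then 1 else 0)"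
      using deig_eq deig_mem deig_on j1 by auto
    show "lamh k \<le> lamh j"
      using lift_Suc_mono_le_ivl[of "{1..<n}" lamh k j] deig_mono k j1 by auto
  qed (use lam_ge j1 uh_V in auto)
  have \<omega>: "0 < sqrt (lam j)" "sqrt (lam j) \<le> sqrt (lamh j)"
    using eig_pos lam_ge[OF order.refl j1(1)] lam_le by auto
  have L2_mem: "u j \<in> {w. L2 \<Omega> w}" "uh j \<in> {w. L2 \<Omega> w}" "u0 \<in> {w. L2 \<Omega> w}" "v0 \<in> {w. L2 \<Omega> w}"
    using H1V eig_mem uh_V j u0 v0 by (auto simp: H1_def)
  have f_mem: "f s \<in> {w. L2 \<Omega> w}" if "s \<in> {0..t}" for s using f_L2 that t by auto
  have f_cont_t: "((\<lambda>r. sqrt (l2inner \<Omega> (\<lambda>x. f r x - f s x) (\<lambda>x. f r x - f s x))) \<longlongrightarrow> 0)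
      (at s within {0..t})" if "s \<in> {0..t}" for s
  proof -
    from that t have "s \<in> {0..T}" "{0..t} \<subseteq> {0..T}" by auto
    from tendsto_within_subset[OF f_cont[OF this(1)] this(2)] show ?thesis unfolding l2norm_def .
  qed
  have unit: "l2inner \<Omega> (u j) (u j) = 1" "l2inner \<Omega> (uh j) (uh j) = 1"
    using eig_on[OF j1(1) j1(1)] deig_on[OF j j] by auto
  have "0 \<le> t" using t by simp
  from L2.modal_error_le[OF L2_mem(1) unit(1) L2_mem(2) unit(2) \<omega> this L2_mem(3,4) f_mem f_cont_t]
  show ?thesis unfolding Let_def l2norm_def real_scaleR_def .
qed

end
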